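(* For all integers $m\geq 3$ and $n\geq 2$, the graph $C[m]\times P[n+1]$ is antimagic.
   Context: All graphs are finite, undirected and simple. $C[m]$ denotes the cycle on $m$ vertices and $P[k]$ the path on $k$ vertices. The Cartesian product $G_1\times G_2$ of graphs $G_1=(V_1,E_1)$ and $G_2=(V_2,E_2)$ has vertex set $V_1\times V_2$, with $(u_1,u_2)$ adjacent to $(v_1,v_2)$ iff either $u_1=v_1$ and $u_2v_2\in E_2$, or $u_2=v_2$ and $u_1v_1\in E_1$. An antimagic labeling of a graph with $m'$ edges is a bijection $f$ from its edge set to $\{1,\ldots,m'\}$ such that the vertex sums $f^+(v)=\sum_{e\ni v} f(e)$ (sum over edges incident with $v$) are pairwise distinct over all vertices $v$. A graph is antimagic if it admits an antimagic labeling. *)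

theory Defs
  imports Main
begin

record 'a graph =
  verts :: "'a set"
  edges :: "'a set set"

definition simple_graph :: "'a graph \<Rightarrow> bool" where
  "simple_graph G \<longleftrightarrow> finite (verts G) \<and>
     (\<forall>e\<in>edges G. card e = 2 \<and> e \<subseteq> verts G)"

definition cycle_graph :: "nat \<Rightarrow> nat graph" where
  "cycle_graph m = \<lparr> verts = {0..<m}, edges = {{i, (i + 1) mod m} | i. i < m} \<rparr>"

definition path_graph :: "nat \<Rightarrow> nat graph" where
  "path_graph k = \<lparr> verts = {0..<k}, edges = {{i, i + 1} | i. i + 1 < k} \<rparr>"

definition cart_prod :: "'a graph \<Rightarrow> 'b graph \<Rightarrow> ('a \<times> 'b) graph" where
  "cart_prod G H = \<lparr> verts = verts G \<times> verts H,
     edges = {{(u1, u2), (v1, v2)} | u1 u2 v1 v2.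
                u1 \<in> verts G \<and> v1 \<in> verts G \<and> u2 \<in> verts H \<and> v2 \<in> verts H \<and>
                ((u1 = v1 \<and> {u2, v2} \<in> edges H) \<or> (u2 = v2 \<and> {u1, v1} \<in> edges G))} \<rparr>"

definition vertex_sum :: "'a graph \<Rightarrow> ('a set \<Rightarrow> nat) \<Rightarrow> 'a \<Rightarrow> nat" where
  "vertex_sum G f v = (\<Sum>e\<in>{e \<in> edges G. v \<in> e}. f e)"

definition antimagic_labeling :: "'a graph \<Rightarrow> ('a set \<Rightarrow> nat) \<Rightarrow> bool" where
  "antimagic_labeling G f \<longleftrightarrow>
     bij_betw f (edges G) {1..card (edges G)} \<and> inj_on (vertex_sum G f) (verts G)"

definition antimagic :: "'a graph \<Rightarrow> bool" where
  "antimagic G \<longleftrightarrow> (\<exists>f. antimagic_labeling G f)"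

end

theory Submission
  imports Defs
begin

(* The labels 1..(2n+1)m are cut into 2n+1 blocks of m consecutive numbers, and each block
   goes to the m edges of one "row": the cycle edges of layer n get block 0, the path edges
   between layers j and j+1 block j+1, the cycle edges of layer 0 block n+1 and those of an
   inner layer j block n+1+j. The vertex sum at (a, b) is then layer_base n b * m plus an
   offset below 4m coming from the positions inside the blocks. Bases of different layers
   are at least 4 apart, so only vertices of the same layer can collide; there the positions
   make the offset injective in a: m - i on the layers 0 and n, and the zigzag order
   1, m, 2, m - 1, ... on inner layers, where consecutive values sum to m + 1 or m + 2. *)

lemma antimagic_via_edge_coding:
  assumes coding: "bij_betw enc I (edges G)"
    and labels: "bij_betw lab I {1..card I}"
    and sums: "inj_on (\<lambda>v. \<Sum>c\<in>{c \<in> I. v \<in> enc c}. lab c) (verts G)"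
  shows "antimagic G"
proof -
  define f where "f = lab \<circ> inv_into I enc"
  have "bij_betw f (edges G) {1..card (edges G)}"
    unfolding f_def using bij_betw_trans[OF bij_betw_inv_into[OF coding] labels]
      bij_betw_same_card[OF coding] by simp
  moreover have "vertex_sum G f = (\<lambda>v. \<Sum>c\<in>{c \<in> I. v \<in> enc c}. lab c)"
  proof
    fix v
    have "{e \<in> edges G. v \<in> e} = enc ` {c \<in> I. v \<in> enc c}"
      using coding by (auto simp: bij_betw_def)
    then have "bij_betw enc {c \<in> I. v \<in> enc c} {e \<in> edges G. v \<in> e}"
      using coding by (auto simp: bij_betw_def intro: inj_on_subset)
    then show "vertex_sum G f v = (\<Sum>c\<in>{c \<in> I. v \<in> enc c}. lab c)"
      unfolding vertex_sum_def f_def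
      by (rule sum.reindex_bij_betw[symmetric, THEN trans])
        (use coding in \<open>auto simp: bij_betw_def\<close>)
  qed
  ultimately have "antimagic_labeling G f"
    using sums by (simp add: antimagic_labeling_def)
  then show ?thesis
    unfolding antimagic_def by blast
qed

lemma bij_betw_mixed_radix:
  fixes m k :: nat
  shows "bij_betw (\<lambda>(q, r). q * m + r) ({..<k} \<times> {1..m}) {1..k * m}"
proof (rule bij_betw_imageI)
  show "inj_on (\<lambda>(q, r). q * m + r) ({..<k} \<times> {1..m})"
  proof (rule inj_on_inverseI[where g = "\<lambda>x. ((x - 1) div m, (x - 1) mod m + 1)"], clarsimp)
    fix q r assume "Suc 0 \<le> r" "r \<le> m"
    then obtain s where "r = Suc s" "s < m" by (cases r) auto
    then show "(q * m + r - Suc 0) div m = q \<and> Suc ((q * m + r - Suc 0) mod m) = r"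
      by simp
  qed
  show "(\<lambda>(q, r). q * m + r) ` ({..<k} \<times> {1..m}) = {1..k * m}"
  proof
    have "q * m + r \<in> {1..k * m}" if "q < k" "r \<in> {1..m}" for q r
    proof -
      have "q * m + m \<le> k * m"
        using \<open>q < k\<close> by (metis Suc_leI add.commute mult_Suc mult_le_mono1)
      then show ?thesis using \<open>r \<in> {1..m}\<close> by auto
    qed
    then show "(\<lambda>(q, r). q * m + r) ` ({..<k} \<times> {1..m}) \<subseteq> {1..k * m}"
      by auto
    show "{1..k * m} \<subseteq> (\<lambda>(q, r). q * m + r) ` ({..<k} \<times> {1..m})"
    proof
      fix x assume x: "x \<in> {1..k * m}"
      then have "m > 0" by (cases m) auto
      have "x = (x - 1) div m * m + ((x - 1) mod m + 1)"
        using x by simp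
      moreover have "(x - 1) div m < k"
        using x \<open>m > 0\<close> by (auto simp: div_less_iff_less_mult)
      moreover have "(x - 1) mod m + 1 \<le> m"
        using \<open>m > 0\<close> by (simp add: Suc_leI)
      ultimately show "x \<in> (\<lambda>(q, r). q * m + r) ` ({..<k} \<times> {1..m})"
        by (intro image_eqI[where x = "((x - 1) div m, (x - 1) mod m + 1)"]) auto
    qed
  qed
qed

lemma mult_add_less_of_gap:
  fixes q q' r r' d m :: nat
  assumes "r < d * m" and "q + d \<le> q'"
  shows "q * m + r < q' * m + r'"
proof -
  have "q * m + r < (q + d) * m" using assms(1) by (simp add: algebra_simps)
  also have "\<dots> \<le> q' * m" using assms(2) by (rule mult_le_mono1)
  finally show ?thesis by linarith
qed

datatype prism_edge = Cyc nat nat | Pth nat nat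

fun edge_of :: "nat \<Rightarrow> prism_edge \<Rightarrow> (nat \<times> nat) set" where
  "edge_of m (Cyc i j) = {(i, j), ((i + 1) mod m, j)}"
| "edge_of m (Pth i j) = {(i, j), (i, j + 1)}"

definition prism_edges :: "nat \<Rightarrow> nat \<Rightarrow> prism_edge set" where
  "prism_edges m n = {Cyc i j | i j. i < m \<and> j \<le> n} \<union> {Pth i j | i j. i < m \<and> j < n}"

lemma edges_cart_prod_cycle_path:
  "edges (cart_prod (cycle_graph m) (path_graph (n + 1))) = edge_of m ` prism_edges m n"
proof (intro equalityI subsetI)
  fix e assume "e \<in> edges (cart_prod (cycle_graph m) (path_graph (n + 1)))"
  then show "e \<in> edge_of m ` prism_edges m n"
    unfolding cart_prod_def cycle_graph_def path_graph_def prism_edges_def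
    apply (auto simp: doubleton_eq_iff insert_commute)
    subgoal for i j by (rule image_eqI[where x = "Pth i j"]) auto
    subgoal for i j by (rule image_eqI[where x = "Pth i j"]) (auto simp: insert_commute)
    subgoal for j i by (rule image_eqI[where x = "Cyc i j"]) auto
    subgoal for j i by (rule image_eqI[where x = "Cyc i j"]) (auto simp: insert_commute)
    done
next
  fix e assume "e \<in> edge_of m ` prism_edges m n"
  then show "e \<in> edges (cart_prod (cycle_graph m) (path_graph (n + 1)))"
    unfolding cart_prod_def cycle_graph_def path_graph_def prism_edges_def
    apply (auto simp: doubleton_eq_iff)
    subgoal for i j by (rule exI[of _ i], rule exI[of _ j], rule exI[of _ "Suc i mod m"]) auto
    subgoal for i j by (rule exI[of _ i], rule exI[of _ j], rule exI[of _ i]) auto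
    done
qed

lemma cycle_succ_succ_neq:
  fixes i m :: nat
  assumes "3 \<le> m" "i < m"
  shows "((i + 1) mod m + 1) mod m \<noteq> i"
proof -
  have "((i + 1) mod m + 1) mod m = (i + 2) mod m"
    by (simp add: mod_Suc_eq)
  moreover have "(i + 2) mod m \<noteq> i"
    using assms by (cases "i + 2 < m"; cases "i + 2 = m") (auto simp: mod_if)
  ultimately show ?thesis by simp
qed

lemma inj_on_edge_of:
  assumes "3 \<le> m"
  shows "inj_on (edge_of m) (prism_edges m n)"
proof (rule inj_onI)
  fix c c' assume "c \<in> prism_edges m n" "c' \<in> prism_edges m n" "edge_of m c = edge_of m c'"
  then show "c = c'"
    unfolding prism_edges_def using cycle_succ_succ_neq[OF assms]
    by (auto simp: doubleton_eq_iff)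
qed

definition cycle_pred :: "nat \<Rightarrow> nat \<Rightarrow> nat" where
  "cycle_pred m a = (if a = 0 then m - 1 else a - 1)"

lemma cycle_succ_eq_iff:
  assumes "i < m" "a < m"
  shows "(i + 1) mod m = a \<longleftrightarrow> i = cycle_pred m a"
  using assms unfolding cycle_pred_def by (cases "i + 1 = m") auto

lemma cycle_pred_neq:
  assumes "2 \<le> m" "a < m"
  shows "cycle_pred m a \<noteq> a"
  using assms unfolding cycle_pred_def by auto

lemma prism_edges_at:
  assumes "a < m" "b \<le> n"
  shows "{c \<in> prism_edges m n. (a, b) \<in> edge_of m c} =
    {Cyc a b, Cyc (cycle_pred m a) b} \<union> (if b < n then {Pth a b} else {})
      \<union> (if 0 < b then {Pth a (b - 1)} else {})" (is "?at = ?nbrs")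
proof (rule set_eqI)
  fix c
  have pred: "cycle_pred m a < m" using assms(1) unfolding cycle_pred_def by auto
  have cyc: "(a, b) \<in> edge_of m (Cyc i j) \<longleftrightarrow> j = b \<and> (i = a \<or> i = cycle_pred m a)"
    if "i < m" for i j using cycle_succ_eq_iff[OF that assms(1)] by auto
  show "c \<in> ?at \<longleftrightarrow> c \<in> ?nbrs"
  proof (cases c)
    case (Cyc i j)
    then show ?thesis
      using assms pred cyc by (auto simp: prism_edges_def simp del: edge_of.simps)
  next
    case (Pth i j)
    then show ?thesis
      using assms by (auto simp: prism_edges_def)
  qed
qed

definition zigzag :: "nat \<Rightarrow> nat \<Rightarrow> nat" where
  "zigzag m i = (if even i then i div 2 + 1 else m - i div 2)"

lemma zigzag_bij: "bij_betw (zigzag m) {..<m} {1..m}"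
proof (rule bij_betw_imageI)
  show "inj_on (zigzag m) {..<m}"
    by (rule inj_onI) (auto simp: zigzag_def split: if_splits elim!: evenE oddE)
  show "zigzag m ` {..<m} = {1..m}"
  proof (intro equalityI subsetI)
    fix s assume "s \<in> zigzag m ` {..<m}"
    then show "s \<in> {1..m}" by (auto simp: zigzag_def elim!: evenE oddE)
  next
    fix s assume s: "s \<in> {1..m}"
    show "s \<in> zigzag m ` {..<m}"
    proof (cases "2 * (s - 1) < m")
      case True
      with s show ?thesis by (intro image_eqI[where x = "2 * (s - 1)"]) (auto simp: zigzag_def)
    next
      case False
      with s show ?thesis by (intro image_eqI[where x = "2 * (m - s) + 1"]) (auto simp: zigzag_def)
    qed
  qed
qed

lemma zigzag_range: "i < m \<Longrightarrow> zigzag m i \<in> {1..m}"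
  using bij_betw_apply[OF zigzag_bij] by simp

lemma zigzag_add_pred:
  assumes "0 < a" "a < m"
  shows "zigzag m a + zigzag m (a - 1) = (if even a then m + 2 else m + 1)"
  using assms by (auto simp: zigzag_def elim!: evenE oddE)

fun label_block :: "nat \<Rightarrow> prism_edge \<Rightarrow> nat" where
  "label_block n (Cyc i j) = (if j = n then 0 else n + 1 + j)"
| "label_block n (Pth i j) = j + 1"

fun label_rank :: "nat \<Rightarrow> nat \<Rightarrow> prism_edge \<Rightarrow> nat" where
  "label_rank m n (Cyc i j) = (if j = 0 \<or> j = n then m - i else zigzag m i)"
| "label_rank m n (Pth i j) = i + 1"

definition label :: "nat \<Rightarrow> nat \<Rightarrow> prism_edge \<Rightarrow> nat" where
  "label m n c = label_block n c * m + label_rank m n c"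

lemma label_block_label_rank_bij:
  "bij_betw (\<lambda>c. (label_block n c, label_rank m n c)) (prism_edges m n) ({..<2 * n + 1} \<times> {1..m})"
proof (rule bij_betw_imageI)
  have zigzag: "inj_on (zigzag m) {..<m}" "zigzag m ` {..<m} = {1..m}"
    using zigzag_bij by (auto simp: bij_betw_def)
  have zigzag_eq_iff: "zigzag m i = zigzag m i' \<longleftrightarrow> i = i'" if "i < m" "i' < m" for i i'
    using inj_onD[OF zigzag(1)] that by blast
  show "inj_on (\<lambda>c. (label_block n c, label_rank m n c)) (prism_edges m n)"
  proof (rule inj_onI)
    fix c c' assume "c \<in> prism_edges m n" "c' \<in> prism_edges m n"
      and "(label_block n c, label_rank m n c) = (label_block n c', label_rank m n c')"
    then show "c = c'"
      using zigzag_eq_iff by (cases c; cases c') (auto simp: prism_edges_def split: if_splits)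
  qed
  show "(\<lambda>c. (label_block n c, label_rank m n c)) ` prism_edges m n = {..<2 * n + 1} \<times> {1..m}"
  proof (intro equalityI subsetI)
    fix x assume "x \<in> (\<lambda>c. (label_block n c, label_rank m n c)) ` prism_edges m n"
    then show "x \<in> {..<2 * n + 1} \<times> {1..m}"
      using zigzag_range by (fastforce simp: prism_edges_def)
  next
    fix x assume "x \<in> {..<2 * n + 1} \<times> {1..m}"
    then obtain q s where x: "x = (q, s)" "q \<le> 2 * n" "1 \<le> s" "s \<le> m" by auto
    consider "q = 0" | "1 \<le> q" "q \<le> n" | "q = n + 1" | "n + 1 < q" using x by linarith
    then show "x \<in> (\<lambda>c. (label_block n c, label_rank m n c)) ` prism_edges m n"
    proof cases
      case 1
      with x show ?thesis by (intro image_eqI[where x = "Cyc (m - s) n"]) (auto simp: prism_edges_def)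
    next
      case 2
      with x show ?thesis by (intro image_eqI[where x = "Pth (s - 1) (q - 1)"]) (auto simp: prism_edges_def)
    next
      case 3
      with x show ?thesis by (intro image_eqI[where x = "Cyc (m - s) 0"]) (auto simp: prism_edges_def)
    next
      case 4
      have "s \<in> zigzag m ` {..<m}" using zigzag(2) x by simp
      then obtain i where "i < m" "zigzag m i = s" by blast
      with 4 x show ?thesis by (intro image_eqI[where x = "Cyc i (q - n - 1)"]) (auto simp: prism_edges_def)
    qed
  qed
qed

lemma label_bij: "bij_betw (label m n) (prism_edges m n) {1..(2 * n + 1) * m}"
proof -
  have "label m n = (\<lambda>(q, r). q * m + r) \<circ> (\<lambda>c. (label_block n c, label_rank m n c))"
    by (auto simp: label_def)
  then show ?thesis
    using bij_betw_trans[OF label_block_label_rank_bij bij_betw_mixed_radix] by simp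
qed

definition layer_base :: "nat \<Rightarrow> nat \<Rightarrow> nat" where
  "layer_base n b = (if b = n then n else if b = 0 then 2 * n + 3 else 2 * n + 4 * b + 3)"

definition layer_offset :: "nat \<Rightarrow> nat \<Rightarrow> nat \<Rightarrow> nat \<Rightarrow> nat" where
  "layer_offset m n a b =
    (if b = 0 \<or> b = n then (m - a) + (m - cycle_pred m a) + (a + 1)
     else zigzag m a + zigzag m (cycle_pred m a) + 2 * (a + 1))"

lemma label_sum_at:
  assumes "2 \<le> m" "1 \<le> n" "a < m" "b \<le> n"
  shows "(\<Sum>c\<in>{c \<in> prism_edges m n. (a, b) \<in> edge_of m c}. label m n c)
    = layer_base n b * m + layer_offset m n a b"
proof -
  let ?at = "{c \<in> prism_edges m n. (a, b) \<in> edge_of m c}"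
  have pred: "cycle_pred m a \<noteq> a" using cycle_pred_neq assms by blast
  note sum_simps = label_def layer_base_def layer_offset_def algebra_simps
  consider "b = n" | "b = 0" | "0 < b" "b < n" using assms by linarith
  then show ?thesis
  proof cases
    case 1
    then have "?at = {Cyc a n, Cyc (cycle_pred m a) n, Pth a (n - 1)}"
      using prism_edges_at[OF assms(3,4)] assms by auto
    then show ?thesis using 1 pred assms by (simp add: sum_simps)
  next
    case 2
    then have "?at = {Cyc a 0, Cyc (cycle_pred m a) 0, Pth a 0}"
      using prism_edges_at[OF assms(3,4)] assms by auto
    then show ?thesis using 2 pred assms by (simp add: sum_simps)
  next
    case 3
    then have "?at = {Cyc a b, Cyc (cycle_pred m a) b, Pth a b, Pth a (b - 1)}"
      using prism_edges_at[OF assms(3,4)] assms by auto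
    then show ?thesis using 3 pred assms by (simp add: sum_simps)
  qed
qed

lemma layer_offset_boundary:
  assumes "b = 0 \<or> b = n" "a < m"
  shows "layer_offset m n a b = (if a = 0 then m + 2 else 2 * m + 2 - a)"
  using assms by (auto simp: layer_offset_def cycle_pred_def)

lemma layer_offset_inner_zero:
  assumes "\<not> (b = 0 \<or> b = n)" "0 < m"
  shows "layer_offset m n 0 b \<le> m + 3"
proof -
  have "zigzag m (m - 1) \<le> m" using zigzag_range[of "m - 1" m] assms(2) by auto
  then show ?thesis using assms by (simp add: layer_offset_def cycle_pred_def zigzag_def)
qed

lemma layer_offset_inner:
  assumes "\<not> (b = 0 \<or> b = n)" "0 < a" "a < m"
  shows "m + 2 * a + 3 \<le> layer_offset m n a b" "layer_offset m n a b \<le> m + 2 * a + 4"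
  using assms zigzag_add_pred[of a m] by (auto simp: layer_offset_def cycle_pred_def)

lemma layer_offset_less:
  assumes "3 \<le> m" "a < m"
  shows "layer_offset m n a b < 4 * m"
proof -
  consider "b = 0 \<or> b = n" | "\<not> (b = 0 \<or> b = n)" "a = 0" | "\<not> (b = 0 \<or> b = n)" "0 < a"
    by blast
  then show ?thesis
  proof cases
    case 1
    then show ?thesis using assms layer_offset_boundary by auto
  next
    case 2
    then show ?thesis using assms layer_offset_inner_zero[of b n m] by simp
  next
    case 3
    then show ?thesis using assms layer_offset_inner(2)[of b n a m] by simp
  qed
qed

lemma inj_on_layer_offset: "inj_on (\<lambda>a. layer_offset m n a b) {..<m}"
proof (rule linorder_inj_onI')
  fix a a' assume "a \<in> {..<m}" "a' \<in> {..<m}" "a < a'"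
  then have "a < m" "a' < m" "0 < a'" by auto
  show "layer_offset m n a b \<noteq> layer_offset m n a' b"
  proof (cases "b = 0 \<or> b = n")
    case True
    then show ?thesis using layer_offset_boundary \<open>a < a'\<close> \<open>a' < m\<close> by auto
  next
    case inner: False
    have "m + 2 * a' + 3 \<le> layer_offset m n a' b"
      using layer_offset_inner(1)[OF inner \<open>0 < a'\<close> \<open>a' < m\<close>] .
    moreover have "layer_offset m n a b < m + 2 * a' + 3"
    proof (cases "a = 0")
      case True
      have "layer_offset m n 0 b \<le> m + 3"
        using layer_offset_inner_zero[OF inner] \<open>a' < m\<close> by simp
      then show ?thesis using True \<open>0 < a'\<close> by simp
    next
      case False
      then show ?thesis
        using layer_offset_inner(2)[OF inner _ \<open>a < m\<close>] \<open>a < a'\<close> by simp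
    qed
    ultimately show ?thesis by simp
  qed
qed

lemma layer_base_gap:
  assumes "b \<le> n" "b' \<le> n" "b \<noteq> b'"
  shows "layer_base n b + 4 \<le> layer_base n b' \<or> layer_base n b' + 4 \<le> layer_base n b"
  using assms unfolding layer_base_def by auto

lemma inj_on_label_sums:
  assumes "3 \<le> m" "1 \<le> n"
  shows "inj_on (\<lambda>v. \<Sum>c\<in>{c \<in> prism_edges m n. v \<in> edge_of m c}. label m n c)
    ({0..<m} \<times> {0..<n + 1})"
proof (rule inj_onI)
  fix v v' assume "v \<in> {0..<m} \<times> {0..<n + 1}" "v' \<in> {0..<m} \<times> {0..<n + 1}"
    and sums: "(\<Sum>c\<in>{c \<in> prism_edges m n. v \<in> edge_of m c}. label m n c)
      = (\<Sum>c\<in>{c \<in> prism_edges m n. v' \<in> edge_of m c}. label m n c)"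
  then obtain a b a' b' where v: "v = (a, b)" "v' = (a', b')" "a < m" "a' < m" "b \<le> n" "b' \<le> n"
    by auto
  have "2 \<le> m" using assms(1) by simp
  have eq: "layer_base n b * m + layer_offset m n a b = layer_base n b' * m + layer_offset m n a' b'"
    using sums unfolding v
    by (simp only: label_sum_at[OF \<open>2 \<le> m\<close> assms(2) \<open>a < m\<close> \<open>b \<le> n\<close>]
        label_sum_at[OF \<open>2 \<le> m\<close> assms(2) \<open>a' < m\<close> \<open>b' \<le> n\<close>])
  have "b = b'"
  proof (rule ccontr)
    assume "b \<noteq> b'"
    then consider "layer_base n b + 4 \<le> layer_base n b'" | "layer_base n b' + 4 \<le> layer_base n b"
      using layer_base_gap v by blast
    then show False
    proof cases
      case 1
      then show False
        using mult_add_less_of_gap[OF layer_offset_less[OF assms(1) \<open>a < m\<close>, of n b] 1,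
            where r' = "layer_offset m n a' b'"] eq by simp
    next
      case 2
      then show False
        using mult_add_less_of_gap[OF layer_offset_less[OF assms(1) \<open>a' < m\<close>, of n b'] 2,
            where r' = "layer_offset m n a b"] eq by simp
    qed
  qed
  then have "layer_offset m n a b = layer_offset m n a' b"
    using eq by simp
  then have "a = a'"
    using inj_onD[OF inj_on_layer_offset] v by blast
  then show "v = v'" using v \<open>b = b'\<close> by simp
qed

theorem lemma4p1:
  fixes m n :: nat
  assumes "m \<ge> 3" and "n \<ge> 2"
  shows "antimagic (cart_prod (cycle_graph m) (path_graph (n + 1)))"
proof (rule antimagic_via_edge_coding)
  show "bij_betw (edge_of m) (prism_edges m n) (edges (cart_prod (cycle_graph m) (path_graph (n + 1))))"
    using inj_on_edge_of[OF assms(1)] edges_cart_prod_cycle_path by (simp add: bij_betw_def)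
  show "bij_betw (label m n) (prism_edges m n) {1..card (prism_edges m n)}"
    using label_bij bij_betw_same_card[OF label_bij] by simp
  \<comment> \<open>The construction only needs 1 \<le> n.\<close>
  show "inj_on (\<lambda>v. \<Sum>c\<in>{c \<in> prism_edges m n. v \<in> edge_of m c}. label m n c)
    (verts (cart_prod (cycle_graph m) (path_graph (n + 1))))"
    using inj_on_label_sums[OF assms(1)] assms(2)
    by (simp add: cart_prod_def cycle_graph_def path_graph_def)
qed

end
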